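(* For every integer $k\ge1$ and every $n\ge2k+1$, the elements $\Lambda_{\{2,4,\dots,2k\}}$ and $\Lambda_{\{1,2k+1\}}$ commute in $U_q(\mathfrak{sl}_2)^{\otimes n}$.
   Context: Let $\mathbb{K}$ be a field and $q\in\mathbb{K}$ not a root of unity. $U_q(\mathfrak{sl}_2)$ is the associative $\mathbb{K}$-algebra with generators $E,F,K,K^{-1}$ and relations $KK^{-1}=K^{-1}K=1$, $KE=q^2EK$, $KF=q^{-2}FK$, $EF-FE=\frac{K-K^{-1}}{q-q^{-1}}$, with Casimir element $\Lambda=(q-q^{-1})^2EF+q^{-1}K+qK^{-1}$ and coproduct $\Delta(E)=E\otimes1+K\otimes E$, $\Delta(F)=F\otimes K^{-1}+1\otimes F$, $\Delta(K^{\pm1})=K^{\pm1}\otimes K^{\pm1}$. $\mathcal{I}_R$ is the subalgebra generated by $EK^{-1},F,K^{-1},\Lambda$, with algebra morphism $\tau_R:\mathcal{I}_R\to U_q(\mathfrak{sl}_2)\otimes\mathcal{I}_R$: $\tau_R(EK^{-1})=K^{-1}\otimes EK^{-1}$, $\tau_R(F)=K\otimes F-q^{-3}(q-q^{-1})^2F^2K\otimes EK^{-1}+q^{-1}(q+q^{-1})FK\otimes K^{-1}-q^{-1}FK\otimes\Lambda$, $\tau_R(K^{-1})=1\otimes K^{-1}-q^{-1}(q-q^{-1})^2F\otimes EK^{-1}$, $\tau_R(\Lambda)=1\otimes\Lambda$. $1^{\otimes\ell}\otimes\varphi\otimes1^{\otimes m}$ applies $\varphi$ to tensor position $\ell+1$.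 For $A=\{a_1<\dots<a_m\}\subseteq\{1,\dots,n\}$, $\Lambda_A=1^{\otimes(a_1-1)}\otimes(\mu_m\circ\cdots\circ\mu_2)(\Lambda)\otimes1^{\otimes(n-a_m)}$ with $\mu_i=(1^{\otimes(a_i-a_1-1)}\otimes\tau_R)\circ\cdots\circ(1^{\otimes(a_{i-1}-a_1+1)}\otimes\tau_R)\circ(1^{\otimes(a_{i-1}-a_1)}\otimes\Delta)$ (no $\tau_R$ factors when $a_i=a_{i-1}+1$). *)

theory Defs
  imports Main
begin

text \<open>
  An atom  At j l  denotes the element l of U_q(sl_2) placed in tensor
  position j (positions are 1-indexed, as in the paper).  The letters
  LEKi and LLam denote E K^{-1} and the Casimir Lambda; together with LF and
  LKi they are the generators of the subalgebra I_R.
\<close>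

datatype letter = LE | LF | LK | LKi | LEKi | LLam

datatype 'k tm = Sc 'k | At nat letter | Add "'k tm" "'k tm" | Mul "'k tm" "'k tm"

text \<open>Evaluation of a symbolic expression in a K-algebra given by a ring 'a,
  a structure map sc : K -> 'a (ring homomorphism into the centre) and
  elements e j, f j, k j, ki j (the generators E, F, K, K^{-1} in position j).\<close>

fun letter_val :: "'k::field \<Rightarrow> ('k \<Rightarrow> 'a::ring_1) \<Rightarrow> (nat \<Rightarrow> 'a) \<Rightarrow> (nat \<Rightarrow> 'a)
    \<Rightarrow> (nat \<Rightarrow> 'a) \<Rightarrow> (nat \<Rightarrow> 'a) \<Rightarrow> nat \<Rightarrow> letter \<Rightarrow> 'a" where
  "letter_val q sc e f k ki j LE = e j"
| "letter_val q sc e f k ki j LF = f j"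
| "letter_val q sc e f k ki j LK = k j"
| "letter_val q sc e f k ki j LKi = ki j"
| "letter_val q sc e f k ki j LEKi = e j * ki j"
| "letter_val q sc e f k ki j LLam =
     sc ((q - inverse q)^2) * e j * f j + sc (inverse q) * k j + sc q * ki j"

fun ev :: "'k::field \<Rightarrow> ('k \<Rightarrow> 'a::ring_1) \<Rightarrow> (nat \<Rightarrow> 'a) \<Rightarrow> (nat \<Rightarrow> 'a)
    \<Rightarrow> (nat \<Rightarrow> 'a) \<Rightarrow> (nat \<Rightarrow> 'a) \<Rightarrow> 'k tm \<Rightarrow> 'a" where
  "ev q sc e f k ki (Sc c) = sc c"
| "ev q sc e f k ki (At j l) = letter_val q sc e f k ki j l"
| "ev q sc e f k ki (Add s t) = ev q sc e f k ki s + ev q sc e f k ki t"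
| "ev q sc e f k ki (Mul s t) = ev q sc e f k ki s * ev q sc e f k ki t"

fun subst :: "(nat \<Rightarrow> letter \<Rightarrow> 'k tm) \<Rightarrow> 'k tm \<Rightarrow> 'k tm" where
  "subst \<sigma> (Sc c) = Sc c"
| "subst \<sigma> (At j l) = \<sigma> j l"
| "subst \<sigma> (Add s t) = Add (subst \<sigma> s) (subst \<sigma> t)"
| "subst \<sigma> (Mul s t) = Mul (subst \<sigma> s) (subst \<sigma> t)"

definition sub :: "'k::field tm \<Rightarrow> 'k tm \<Rightarrow> 'k tm" where
  "sub s t = Add s (Mul (Sc (-1)) t)"

text \<open>The coproduct Delta applied in tensor position p (result in positions p, p+1).
  On E, F, K, K^{-1} these are the defining formulas; on E K^{-1} and Lambda
  they are Delta(E)Delta(K^{-1}) and Delta(Lambda) rewritten so that the right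
  tensor factor is expressed through the generators of I_R:
   Delta(E K^{-1}) = E K^{-1} (x) K^{-1} + 1 (x) E K^{-1},
   Delta(Lambda) = Lambda (x) K^{-1} - q^{-1} K (x) K^{-1} - q K (x) K^{-1}
                   + (q-q^{-1})^2 E (x) F + (q-q^{-1})^2 K F (x) E K^{-1} + K (x) Lambda.\<close>

fun delta_img :: "'k::field \<Rightarrow> nat \<Rightarrow> letter \<Rightarrow> 'k tm" where
  "delta_img q p LE = Add (At p LE) (Mul (At p LK) (At (p+1) LE))"
| "delta_img q p LF = Add (Mul (At p LF) (At (p+1) LKi)) (At (p+1) LF)"
| "delta_img q p LK = Mul (At p LK) (At (p+1) LK)"
| "delta_img q p LKi = Mul (At p LKi) (At (p+1) LKi)"
| "delta_img q p LEKi = Add (Mul (At p LEKi) (At (p+1) LKi)) (At (p+1) LEKi)"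
| "delta_img q p LLam =
     Add (Mul (At p LLam) (At (p+1) LKi))
    (Add (Mul (Sc (- inverse q)) (Mul (At p LK) (At (p+1) LKi)))
    (Add (Mul (Sc (- q)) (Mul (At p LK) (At (p+1) LKi)))
    (Add (Mul (Sc ((q - inverse q)^2)) (Mul (At p LE) (At (p+1) LF)))
    (Add (Mul (Sc ((q - inverse q)^2)) (Mul (Mul (At p LK) (At p LF)) (At (p+1) LEKi)))
         (Mul (At p LK) (At (p+1) LLam))))))"

definition delta_at :: "'k::field \<Rightarrow> nat \<Rightarrow> 'k tm \<Rightarrow> 'k tm" where
  "delta_at q p = subst (\<lambda>j l. if j = p then delta_img q p l else At j l)"

text \<open>tau_R applied in tensor position j (result in positions j, j+1), defined on the
  generators E K^{-1}, F, K^{-1}, Lambda of I_R exactly as in the paper.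
  (It is only ever applied to a factor lying in I_R, written in these generators;
  the letters LE, LK never occur there and are left unchanged.)\<close>

fun tauR_img :: "'k::field \<Rightarrow> nat \<Rightarrow> letter \<Rightarrow> 'k tm" where
  "tauR_img q j LEKi = Mul (At j LKi) (At (j+1) LEKi)"
| "tauR_img q j LF =
     Add (Mul (At j LK) (At (j+1) LF))
    (Add (Mul (Sc (- (inverse q ^ 3) * (q - inverse q)^2))
              (Mul (Mul (Mul (At j LF) (At j LF)) (At j LK)) (At (j+1) LEKi)))
    (Add (Mul (Sc (inverse q * (q + inverse q))) (Mul (Mul (At j LF) (At j LK)) (At (j+1) LKi)))
         (Mul (Sc (- inverse q)) (Mul (Mul (At j LF) (At j LK)) (At (j+1) LLam)))))"
| "tauR_img q j LKi =
     Add (At (j+1) LKi)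
         (Mul (Sc (- inverse q * (q - inverse q)^2)) (Mul (At j LF) (At (j+1) LEKi)))"
| "tauR_img q j LLam = At (j+1) LLam"
| "tauR_img q j LE = At j LE"
| "tauR_img q j LK = At j LK"

definition tauR_at :: "'k::field \<Rightarrow> nat \<Rightarrow> 'k tm \<Rightarrow> 'k tm" where
  "tauR_at q j = subst (\<lambda>i l. if i = j then tauR_img q j l else At i l)"

text \<open>mu_i in absolute positions: Delta in position a_{i-1}, then tau_R in positions
  a_{i-1}+1, ..., a_i - 1 (in this order).\<close>

definition mu_step :: "'k::field \<Rightarrow> nat \<Rightarrow> nat \<Rightarrow> 'k tm \<Rightarrow> 'k tm" where
  "mu_step q prev a t = fold (tauR_at q) [prev+1..<a] (delta_at q prev t)"

fun lam_steps :: "'k::field \<Rightarrow> nat \<Rightarrow> nat list \<Rightarrow> 'k tm \<Rightarrow> 'k tm" where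
  "lam_steps q prev [] t = t"
| "lam_steps q prev (a # as) t = lam_steps q a as (mu_step q prev a t)"

definition LamA :: "'k::field \<Rightarrow> nat set \<Rightarrow> 'k tm" where
  "LamA q A = (let xs = sorted_list_of_set A
               in lam_steps q (hd xs) (tl xs) (At (hd xs) LLam))"

text \<open>q is not a root of unity (and q is invertible, as q^{-1} is used).\<close>

definition not_root_of_unity :: "'k::field \<Rightarrow> bool" where
  "not_root_of_unity q \<longleftrightarrow> q \<noteq> 0 \<and> (\<forall>m::nat. m \<ge> 1 \<longrightarrow> q ^ m \<noteq> 1)"

text \<open>A K-algebra 'a (ring with central ring homomorphism sc from K) together with
  elements satisfying the defining relations of U_q(sl_2)^{tensor n}: the relations of
  U_q(sl_2) in each position 1..n, and generators in different positions commute.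
  U_q(sl_2)^{tensor n} is the universal such algebra.\<close>

definition Uq_tensor_model :: "'k::field \<Rightarrow> nat \<Rightarrow> ('k \<Rightarrow> 'a::ring_1) \<Rightarrow> (nat \<Rightarrow> 'a)
    \<Rightarrow> (nat \<Rightarrow> 'a) \<Rightarrow> (nat \<Rightarrow> 'a) \<Rightarrow> (nat \<Rightarrow> 'a) \<Rightarrow> bool" where
  "Uq_tensor_model q n sc e f k ki \<longleftrightarrow>
     sc 1 = 1 \<and> (\<forall>x y. sc (x + y) = sc x + sc y) \<and> (\<forall>x y. sc (x * y) = sc x * sc y) \<and>
     (\<forall>x a. sc x * a = a * sc x) \<and>
     (\<forall>i\<in>{1..n}.
        k i * ki i = 1 \<and> ki i * k i = 1 \<and>
        k i * e i = sc (q^2) * e i * k i \<and>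
        k i * f i = sc (inverse q ^ 2) * f i * k i \<and>
        e i * f i - f i * e i = sc (inverse (q - inverse q)) * (k i - ki i)) \<and>
     (\<forall>i\<in>{1..n}. \<forall>j\<in>{1..n}. i \<noteq> j \<longrightarrow>
        (\<forall>x\<in>{e i, f i, k i, ki i}. \<forall>y\<in>{e j, f j, k j, ki j}. x * y = y * x))"

end

theory Submission
  imports Defs
begin

text \<open>
  Write C = \<Lambda>_{2,4,...,2k} and D = \<Lambda>_{1,2k+1}, and let y, x, x' range over the generators
  K^-1, EK^-1, F, \<Lambda> of I_R. On them \<Delta> and \<tau>_R are given by coefficient matrices,
  \<Delta>(y) = \<Sigma>_x \<delta>(y,x) \<otimes> x and \<tau>_R(y) = \<Sigma>_x T(F,K,K^-1)(y,x) \<otimes> x, and coassociativity of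
  the coaction \<tau>_R collapses the \<tau>_R-steps at positions 2, ..., 2k into a single matrix:
    D = \<Sigma>_{x,x'} \<delta>(\<Lambda>,x)_1 T(\<Delta>^m F, \<Delta>^m K, \<Delta>^m K^-1)(x,x') x'_{2k+1},
  where \<Delta>^m is the iterated coproduct placed in positions 2, ..., 2k.
  The element C lives in positions 2, ..., 2k, so it commutes with positions 1 and 2k+1.
  Following the construction of C step by step, the images of the generators y satisfy against
  \<Delta>^m K^-1 and \<Delta>^m F the relations y K^-1 = w(y) K^-1 y and y F - F y = K^-1 \<Sigma>_x g(y,x) x
  that hold in U_q(sl_2); each step only needs the matrices \<delta> and T to be compatible with
  these relations, which is a finite computation in U_q(sl_2). For the central \<Lambda> we have
  w = 1 and g = 0, so C commutes with \<Delta>^m K^-1, with its inverse \<Delta>^m K and with \<Delta>^m F,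
  hence with D.
\<close>

lemma left_commute_of: "a * b = b * a \<Longrightarrow> a * (b * w) = b * (a * (w::'a::semigroup_mult))"
  by (metis mult.assoc)

definition commute :: "'a::ring_1 \<Rightarrow> 'a \<Rightarrow> bool" where
  "commute a b \<longleftrightarrow> a * b = b * a"

lemma commute_sym: "commute a b \<Longrightarrow> commute b a"
  by (simp add: commute_def)

lemma commute_0: "commute z 0" and commute_1: "commute z 1"
  by (simp_all add: commute_def)

lemma commute_mult: "commute z a \<Longrightarrow> commute z b \<Longrightarrow> commute z (a * b)"
  unfolding commute_def by (simp add: left_commute_of mult.assoc)

lemma commute_add: "commute z a \<Longrightarrow> commute z b \<Longrightarrow> commute z (a + b)"
  unfolding commute_def by (simp add: distrib_left distrib_right)

lemmas commute_closed = commute_0 commute_1 commute_mult commute_add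

lemma commute_sum: "(\<And>x. x \<in> A \<Longrightarrow> commute z (g x)) \<Longrightarrow> commute z (\<Sum>x\<in>A. g x)"
  by (induct A rule: infinite_finite_induct) (simp_all add: commute_closed)

lemma commute_inverse:
  assumes "commute z a" and "a * b = 1" and "b * a = 1"
  shows "commute z b"
proof -
  have "z * b = b * a * z * b"
    using assms(3) by simp
  also have "\<dots> = b * z * (a * b)"
    using assms(1) by (simp add: commute_def mult.assoc left_commute_of)
  finally show ?thesis
    using assms(2) by (simp add: commute_def)
qed

section \<open>Evaluating tensor expressions\<close>

fun eval_tm :: "('k \<Rightarrow> 'a::ring_1) \<Rightarrow> (nat \<Rightarrow> letter \<Rightarrow> 'a) \<Rightarrow> 'k tm \<Rightarrow> 'a" where
  "eval_tm sc L (Sc c) = sc c"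
| "eval_tm sc L (At j l) = L j l"
| "eval_tm sc L (Add s t) = eval_tm sc L s + eval_tm sc L t"
| "eval_tm sc L (Mul s t) = eval_tm sc L s * eval_tm sc L t"

lemma ev_eq_eval_tm: "ev q sc e f k ki t = eval_tm sc (letter_val q sc e f k ki) t"
  by (induct t) simp_all

lemma eval_tm_subst: "eval_tm sc L (subst \<sigma> t) = eval_tm sc (\<lambda>j l. eval_tm sc L (\<sigma> j l)) t"
  by (induct t) simp_all

text \<open>
  A valuation L assigns the value L j l to the letter l in tensor position j. Applying \<tau>_R or
  \<Delta> at position p to a tensor expression amounts to changing the valuation at position p.
\<close>

definition tauR_val :: "'k::field \<Rightarrow> ('k \<Rightarrow> 'a::ring_1) \<Rightarrow> nat \<Rightarrow> (nat \<Rightarrow> letter \<Rightarrow> 'a)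
    \<Rightarrow> nat \<Rightarrow> letter \<Rightarrow> 'a" where
  "tauR_val q sc p L = (\<lambda>j l. if j = p then eval_tm sc L (tauR_img q p l) else L j l)"

definition delta_val :: "'k::field \<Rightarrow> ('k \<Rightarrow> 'a::ring_1) \<Rightarrow> nat \<Rightarrow> (nat \<Rightarrow> letter \<Rightarrow> 'a)
    \<Rightarrow> nat \<Rightarrow> letter \<Rightarrow> 'a" where
  "delta_val q sc p L = (\<lambda>j l. if j = p then eval_tm sc L (delta_img q p l) else L j l)"

lemma eval_tm_tauR_at: "eval_tm sc L (tauR_at q p t) = eval_tm sc (tauR_val q sc p L) t"
proof -
  have "(\<lambda>j l. eval_tm sc L (if j = p then tauR_img q p l else At j l)) = tauR_val q sc p L"
    by (auto simp: tauR_val_def fun_eq_iff)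
  then show ?thesis
    by (simp add: tauR_at_def eval_tm_subst)
qed

lemma eval_tm_delta_at: "eval_tm sc L (delta_at q p t) = eval_tm sc (delta_val q sc p L) t"
proof -
  have "(\<lambda>j l. eval_tm sc L (if j = p then delta_img q p l else At j l)) = delta_val q sc p L"
    by (auto simp: delta_val_def fun_eq_iff)
  then show ?thesis
    by (simp add: delta_at_def eval_tm_subst)
qed

lemma tauR_val_other: "j \<noteq> p \<Longrightarrow> tauR_val q sc p L j = L j"
  by (simp add: tauR_val_def fun_eq_iff)

lemma delta_val_other: "j \<noteq> p \<Longrightarrow> delta_val q sc p L j = L j"
  by (simp add: delta_val_def fun_eq_iff)

fun tauR_chain_val :: "'k::field \<Rightarrow> ('k \<Rightarrow> 'a::ring_1) \<Rightarrow> nat \<Rightarrow> nat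
    \<Rightarrow> (nat \<Rightarrow> letter \<Rightarrow> 'a) \<Rightarrow> nat \<Rightarrow> letter \<Rightarrow> 'a" where
  "tauR_chain_val q sc a 0 L = L"
| "tauR_chain_val q sc a (Suc m) L = tauR_val q sc a (tauR_chain_val q sc (Suc a) m L)"

lemma eval_tm_fold_tauR_at:
  "eval_tm sc L (fold (tauR_at q) [a..<a + m] t) = eval_tm sc (tauR_chain_val q sc a m L) t"
proof (induct m arbitrary: a t)
  case 0
  show ?case by simp
next
  case (Suc m)
  have "[a..<a + Suc m] = a # [Suc a..<Suc a + m]"
    by (simp del: upt_Suc add: upt_conv_Cons)
  then have "eval_tm sc L (fold (tauR_at q) [a..<a + Suc m] t)
      = eval_tm sc L (fold (tauR_at q) [Suc a..<Suc a + m] (tauR_at q a t))"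
    by simp
  also have "\<dots> = eval_tm sc (tauR_chain_val q sc (Suc a) m L) (tauR_at q a t)"
    by (rule Suc)
  finally show ?case
    by (simp add: eval_tm_tauR_at)
qed

lemma tauR_chain_val_below: "j < a \<Longrightarrow> tauR_chain_val q sc a m L j = L j"
  by (induct m arbitrary: a) (simp_all add: tauR_val_other)

fun lam_evens_val :: "'k::field \<Rightarrow> ('k \<Rightarrow> 'a::ring_1) \<Rightarrow> (nat \<Rightarrow> letter \<Rightarrow> 'a) \<Rightarrow> nat \<Rightarrow> nat
    \<Rightarrow> nat \<Rightarrow> letter \<Rightarrow> 'a" where
  "lam_evens_val q sc L p 0 = L"
| "lam_evens_val q sc L p (Suc m) =
     delta_val q sc p (tauR_val q sc (Suc p) (lam_evens_val q sc L (Suc (Suc p)) m))"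

lemma map_step2_upt_Suc:
  "map (\<lambda>j. p + 2 * j) [1..<Suc (Suc m)] = Suc (Suc p) # map (\<lambda>j. Suc (Suc p) + 2 * j) [1..<Suc m]"
proof -
  have "[1..<Suc (Suc m)] = 1 # map Suc [1..<Suc m]"
    by (simp del: upt_Suc add: upt_conv_Cons map_Suc_upt)
  then show ?thesis
    by (simp del: upt_Suc)
qed

lemma eval_tm_lam_steps_step2:
  "eval_tm sc L (lam_steps q p (map (\<lambda>j. p + 2 * j) [1..<Suc m]) t)
     = eval_tm sc (lam_evens_val q sc L p m) t"
proof (induct m arbitrary: p t)
  case 0
  show ?case by simp
next
  case (Suc m)
  have "mu_step q p (Suc (Suc p)) t = tauR_at q (Suc p) (delta_at q p t)"
    by (simp add: mu_step_def)
  then show ?case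
    by (simp only: map_step2_upt_Suc lam_steps.simps Suc eval_tm_tauR_at eval_tm_delta_at
        lam_evens_val.simps)
qed

lemma lam_evens_val_below: "j < p \<Longrightarrow> lam_evens_val q sc L p m j = L j"
  by (induct m arbitrary: p) (simp_all add: tauR_val_other delta_val_other)

lemma LamA_step2:
  "LamA q ((\<lambda>i. p + 2 * i) ` {0..m}) = lam_steps q p (map (\<lambda>j. p + 2 * j) [1..<Suc m]) (At p LLam)"
proof -
  let ?xs = "map (\<lambda>j. p + 2 * j) [0..<Suc m]"
  have "(\<lambda>i. p + 2 * i) ` {0..m} = set ?xs"
    by (simp add: atLeastLessThanSuc_atLeastAtMost del: upt_Suc)
  moreover have "sorted ?xs" "distinct ?xs"
    by (simp_all add: sorted_map distinct_map inj_on_def del: upt_Suc)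
  ultimately have "sorted_list_of_set ((\<lambda>i. p + 2 * i) ` {0..m}) = ?xs"
    by (metis sorted_list_of_set_sort_remdups distinct_remdups_id sorted_sort_id)
  moreover have "?xs = p # map (\<lambda>j. p + 2 * j) [1..<Suc m]"
    by (simp del: upt_Suc add: upt_conv_Cons)
  ultimately show ?thesis
    by (simp add: LamA_def del: upt_Suc)
qed

lemma eval_tm_LamA_step2:
  "eval_tm sc L (LamA q ((\<lambda>i. p + 2 * i) ` {0..m})) = lam_evens_val q sc L p m p LLam"
  unfolding LamA_step2 eval_tm_lam_steps_step2 by simp

lemma eval_tm_LamA_evens:
  "eval_tm sc L (LamA q ((\<lambda>i. 2 * i) ` {1..Suc m})) = lam_evens_val q sc L 2 m 2 LLam"
proof -
  have "{1..Suc m} = Suc ` {0..m}"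
    by (simp add: image_Suc_atLeastAtMost)
  then have "(\<lambda>i. 2 * i) ` {1..Suc m} = (\<lambda>i. 2 + 2 * i) ` {0..m}"
    by (simp only: image_image) simp
  then show ?thesis
    by (simp only: eval_tm_LamA_step2)
qed

lemma LamA_pair: "a < b \<Longrightarrow> LamA q {a, b} = fold (tauR_at q) [Suc a..<b] (delta_at q a (At a LLam))"
proof -
  assume "a < b"
  then have "sorted_list_of_set {a, b} = [a, b]"
    by (simp add: sorted_list_of_set_unique[THEN iffD1])
  then show ?thesis
    by (simp add: LamA_def mu_step_def)
qed

section \<open>Scalars and the generators of I_R\<close>

locale Uq_scalars =
  fixes sc :: "'k::field \<Rightarrow> 'a::ring_1" and q :: 'k
  assumes sc_1: "sc 1 = 1" and sc_add: "\<And>x y. sc (x + y) = sc x + sc y"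
    and sc_mult: "\<And>x y. sc (x * y) = sc x * sc y" and sc_central: "\<And>x a. sc x * a = a * sc x"
    and q_nonzero: "q \<noteq> 0" and q_minus_inverse_nonzero: "q - inverse q \<noteq> 0"
begin

lemma sc_0: "sc 0 = 0"
  using sc_add[of 0 0] by simp

lemma sc_uminus: "sc (- x) = - sc x"
  using sc_add[of x "- x"] by (simp add: sc_0 add_eq_0_iff)

lemma sc_mult_left: "sc a * (sc b * x) = sc (a * b) * x"
  by (simp add: sc_mult mult.assoc)

lemma sc_commute: "x * (sc a * y) = sc a * (x * y)" "x * sc a = sc a * x"
  by (metis mult.assoc sc_central)+

lemma uminus_as_sc: "- x = sc (- 1) * x" and diff_as_sc: "x - y = x + sc (- 1) * y"
  by (simp_all add: sc_uminus sc_1)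

text \<open>Merging like terms of a right-nested sum at most four summands apart suffices for all
  identities checked below.\<close>

lemma sc_collect:
  "sc a * x + sc b * x = sc (a + b) * x"
  "sc a * x + (sc b * x + r) = sc (a + b) * x + r"
  "x + sc b * x = sc (1 + b) * x"
  "x + (sc b * x + r) = sc (1 + b) * x + r"
  "sc a * x + x = sc (a + 1) * x"
  "sc a * x + (x + r) = sc (a + 1) * x + r"
  "sc a * m + (y + sc b * m) = sc (a + b) * m + y"
  "sc a * m + (y + (sc b * m + r)) = sc (a + b) * m + (y + r)"
  "sc a * m + (y1 + (y2 + sc b * m)) = sc (a + b) * m + (y1 + y2)"
  "sc a * m + (y1 + (y2 + (sc b * m + r))) = sc (a + b) * m + (y1 + (y2 + r))"
  "sc a * m + (y1 + (y2 + (y3 + sc b * m))) = sc (a + b) * m + (y1 + (y2 + y3))"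
  "sc a * m + (y1 + (y2 + (y3 + (sc b * m + r)))) = sc (a + b) * m + (y1 + (y2 + (y3 + r)))"
  "sc a + (y + sc b) = sc (a + b) + y"
  "sc a + (y + (sc b + r)) = sc (a + b) + (y + r)"
  "sc a + (y1 + (y2 + sc b)) = sc (a + b) + (y1 + y2)"
  "sc a + (y1 + (y2 + (sc b + r))) = sc (a + b) + (y1 + (y2 + r))"
  "sc a + (y1 + (y2 + (y3 + sc b))) = sc (a + b) + (y1 + (y2 + y3))"
  "sc a + (y1 + (y2 + (y3 + (sc b + r)))) = sc (a + b) + (y1 + (y2 + (y3 + r)))"
  "sc a + sc b = sc (a + b)" "sc a + (sc b + r) = sc (a + b) + r"
  "1 + sc a = sc (1 + a)" "1 + (sc a + r) = sc (1 + a) + r" "sc a + 1 = sc (a + 1)"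
  "1 + (y + sc b) = sc (1 + b) + y" "1 + (y + (sc b + r)) = sc (1 + b) + (y + r)"
  "sc a + (y + 1) = sc (a + 1) + y" "sc a + (y + (1 + r)) = sc (a + 1) + (y + r)"
  by (simp_all add: sc_add sc_1 distrib_right algebra_simps)

lemma sc_double: "x + x = sc 2 * x" "x + (x + r) = sc 2 * x + r"
  using sc_add[of 1 1] by (simp_all add: sc_1 mult_2 add.assoc[symmetric])

lemma eq_by_diff: "x + sc (- 1) * y = 0 \<Longrightarrow> x = y"
  by (simp add: sc_uminus sc_1)

lemma sc_coeffs_zero:
  "a = 0 \<Longrightarrow> r = 0 \<Longrightarrow> sc a * m + r = 0" "a = 0 \<Longrightarrow> r = 0 \<Longrightarrow> sc a + r = 0"
  "a = 0 \<Longrightarrow> sc a * m = 0" "a = 0 \<Longrightarrow> sc a = 0"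
  by (simp_all add: sc_0)

lemmas sc_normalize = sc_mult_left sc_mult[symmetric] sc_collect sc_double sc_0 sc_1
  add.assoc mult.assoc distrib_left distrib_right diff_as_sc uminus_as_sc

text \<open>Names for the inverses turn the coefficient identities into polynomial identities modulo
  q qi = 1 and (q - qi) qd = 1, which \<open>algebra\<close> decides.\<close>

definition qi where "qi = inverse q"
definition qd where "qd = inverse (q - inverse q)"

lemma q_abbrevs: "inverse q = qi" "inverse (q - qi) = qd"
  by (simp_all add: qi_def qd_def)

lemma q_abbrev_facts: "q * qi = 1" "(q - qi) * qd = 1"
  using q_nonzero q_minus_inverse_nonzero by (simp_all add: qi_def qd_def)

end

definition IR_letters :: "letter set" where
  "IR_letters = {LKi, LEKi, LF, LLam}"

definition Ki_weight :: "'k::field \<Rightarrow> letter \<Rightarrow> 'k" where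
  "Ki_weight q y = (case y of LEKi \<Rightarrow> q^2 | LF \<Rightarrow> inverse q ^ 2 | _ \<Rightarrow> 1)"

definition F_comm_coeff :: "'k::field \<Rightarrow> letter \<Rightarrow> letter \<Rightarrow> 'k" where
  "F_comm_coeff q y x = (case y of
       LKi \<Rightarrow> (case x of LF \<Rightarrow> 1 - inverse q ^ 2 | _ \<Rightarrow> 0)
     | LEKi \<Rightarrow> (case x of LLam \<Rightarrow> q * inverse (q - inverse q)
                       | LKi \<Rightarrow> - (q^2 + 1) * inverse (q - inverse q) | _ \<Rightarrow> 0)
     | _ \<Rightarrow> 0)"

context Uq_scalars
begin

definition F_comm :: "(letter \<Rightarrow> 'a) \<Rightarrow> letter \<Rightarrow> 'a" where
  "F_comm Z y = (\<Sum>x\<in>IR_letters. sc (F_comm_coeff q y x) * Z x)"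

text \<open>The relations of the generators y of I_R with K^-1 and F in U_q(sl_2), imposed on
  elements Z y against X and Y.\<close>

definition IR_rels :: "(letter \<Rightarrow> 'a) \<Rightarrow> 'a \<Rightarrow> 'a \<Rightarrow> bool" where
  "IR_rels Z X Y \<longleftrightarrow> (\<forall>y\<in>IR_letters.
     Z y * X = sc (Ki_weight q y) * (X * Z y) \<and> Z y * Y - Y * Z y = X * F_comm Z y)"

definition IR_compatible :: "'a \<Rightarrow> 'a \<Rightarrow> (letter \<Rightarrow> letter \<Rightarrow> 'a) \<Rightarrow> bool" where
  "IR_compatible F Ki c \<longleftrightarrow> (\<forall>y\<in>IR_letters. \<forall>x\<in>IR_letters.
       sc (Ki_weight q x) * (c y x * Ki) = sc (Ki_weight q y) * (Ki * c y x)
     \<and> sc (Ki_weight q x) * (c y x * F) - F * c y x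
         + (\<Sum>x'\<in>IR_letters. c y x' * sc (F_comm_coeff q x' x))
       = Ki * (\<Sum>y'\<in>IR_letters. sc (F_comm_coeff q y y') * c y' x))"

definition casimir :: "'a \<Rightarrow> 'a \<Rightarrow> 'a \<Rightarrow> 'a \<Rightarrow> 'a" where
  "casimir E F K Ki = sc ((q - inverse q)^2) * E * F + sc (inverse q) * K + sc q * Ki"

definition letter_elem :: "'a \<Rightarrow> 'a \<Rightarrow> 'a \<Rightarrow> 'a \<Rightarrow> letter \<Rightarrow> 'a" where
  "letter_elem E F K Ki x = (case x of LE \<Rightarrow> E | LF \<Rightarrow> F | LK \<Rightarrow> K | LKi \<Rightarrow> Ki
     | LEKi \<Rightarrow> E * Ki | LLam \<Rightarrow> casimir E F K Ki)"

text \<open>On the generators of I_R, \<tau>_R(y) = \<Sigma>_x tauR_coeff F K K^-1 y x \<otimes> x and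
  \<Delta>(y) = \<Sigma>_x delta_coeff E F K K^-1 y x \<otimes> x.\<close>

definition tauR_coeff :: "'a \<Rightarrow> 'a \<Rightarrow> 'a \<Rightarrow> letter \<Rightarrow> letter \<Rightarrow> 'a" where
  "tauR_coeff F K Ki y x = (case y of
      LKi \<Rightarrow> (case x of LKi \<Rightarrow> 1 | LEKi \<Rightarrow> sc (- inverse q * (q - inverse q)^2) * F | _ \<Rightarrow> 0)
    | LEKi \<Rightarrow> (case x of LEKi \<Rightarrow> Ki | _ \<Rightarrow> 0)
    | LF \<Rightarrow> (case x of LF \<Rightarrow> K
                   | LEKi \<Rightarrow> sc (- (inverse q ^ 3) * (q - inverse q)^2) * (F * (F * K))
                   | LKi \<Rightarrow> sc (inverse q * (q + inverse q)) * (F * K)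
                   | LLam \<Rightarrow> sc (- inverse q) * (F * K) | _ \<Rightarrow> 0)
    | LLam \<Rightarrow> (case x of LLam \<Rightarrow> 1 | _ \<Rightarrow> 0)
    | _ \<Rightarrow> 0)"

definition delta_coeff :: "'a \<Rightarrow> 'a \<Rightarrow> 'a \<Rightarrow> 'a \<Rightarrow> letter \<Rightarrow> letter \<Rightarrow> 'a" where
  "delta_coeff E F K Ki y x = (case y of
      LKi \<Rightarrow> (case x of LKi \<Rightarrow> Ki | _ \<Rightarrow> 0)
    | LEKi \<Rightarrow> (case x of LKi \<Rightarrow> E * Ki | LEKi \<Rightarrow> 1 | _ \<Rightarrow> 0)
    | LF \<Rightarrow> (case x of LKi \<Rightarrow> F | LF \<Rightarrow> 1 | _ \<Rightarrow> 0)
    | LLam \<Rightarrow> (case x of LKi \<Rightarrow> casimir E F K Ki + sc (- inverse q) * K + sc (- q) * K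
                   | LF \<Rightarrow> sc ((q - inverse q)^2) * E
                   | LEKi \<Rightarrow> sc ((q - inverse q)^2) * (K * F)
                   | LLam \<Rightarrow> K | _ \<Rightarrow> 0)
    | _ \<Rightarrow> 0)"

end

locale Uq_generators = Uq_scalars sc q for sc :: "'k::field \<Rightarrow> 'a::ring_1" and q :: 'k +
  fixes E F K Ki :: 'a
  assumes K_Ki: "K * Ki = 1" and Ki_K: "Ki * K = 1"
    and K_E: "K * E = sc (q^2) * E * K"
    and K_F: "K * F = sc (inverse q ^ 2) * F * K"
    and E_F: "E * F - F * E = sc (inverse (q - inverse q)) * (K - Ki)"
begin

lemma K_Ki_cancel: "K * (Ki * x) = x" "Ki * (K * x) = x"
  by (simp_all add: mult.assoc[symmetric] K_Ki Ki_K)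

lemma Ki_F: "Ki * F = sc (q ^ 2) * (F * Ki)"
proof -
  have "Ki * F = Ki * (F * K) * Ki"
    by (simp add: mult.assoc K_Ki)
  also have "\<dots> = Ki * (sc (q ^ 2) * (K * F)) * Ki"
    using q_nonzero by (simp add: K_F sc_mult_left mult.assoc power_mult_distrib[symmetric] sc_1)
  also have "\<dots> = sc (q ^ 2) * (F * Ki)"
    by (simp add: sc_commute mult.assoc K_Ki_cancel)
  finally show ?thesis .
qed

lemma Ki_E: "Ki * E = sc (inverse q ^ 2) * (E * Ki)"
proof -
  have "Ki * E = Ki * (E * K) * Ki"
    by (simp add: mult.assoc K_Ki)
  also have "\<dots> = Ki * (sc (inverse q ^ 2) * (K * E)) * Ki"
    using q_nonzero by (simp add: K_E sc_mult_left mult.assoc power_mult_distrib[symmetric] sc_1)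
  also have "\<dots> = sc (inverse q ^ 2) * (E * Ki)"
    by (simp add: sc_commute mult.assoc K_Ki_cancel)
  finally show ?thesis .
qed

lemma F_E: "F * E = E * F + sc (- inverse (q - inverse q)) * K + sc (inverse (q - inverse q)) * Ki"
  using E_F by (simp add: algebra_simps sc_uminus)

lemma normalize_left:
  "K * (F * x) = sc (inverse q ^ 2) * (F * (K * x))"
  "Ki * (F * x) = sc (q ^ 2) * (F * (Ki * x))"
  "K * (E * x) = sc (q ^ 2) * (E * (K * x))"
  "Ki * (E * x) = sc (inverse q ^ 2) * (E * (Ki * x))"
  "F * (E * x) = E * (F * x) + sc (- inverse (q - inverse q)) * (K * x)
     + sc (inverse (q - inverse q)) * (Ki * x)"
  by (simp_all add: mult.assoc[symmetric] K_F Ki_F K_E Ki_E F_E sc_commute distrib_right)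

lemma sc_commute_gens:
  "E * (sc a * y) = sc a * (E * y)" "F * (sc a * y) = sc a * (F * y)"
  "K * (sc a * y) = sc a * (K * y)" "Ki * (sc a * y) = sc a * (Ki * y)"
  "E * sc a = sc a * E" "F * sc a = sc a * F" "K * sc a = sc a * K" "Ki * sc a = sc a * Ki"
  by (simp_all add: sc_commute)

text \<open>Identities in U_q(sl_2) are checked by rewriting the difference of both sides into a
  right-nested sum of scalar multiples of monomials with E before F before K, K^-1, and
  comparing coefficients in 'k.\<close>

lemmas normalize = normalize_left K_Ki_cancel K_F[simplified mult.assoc] Ki_F K_E[simplified mult.assoc]
  Ki_E F_E K_Ki Ki_K sc_commute_gens sc_normalize

lemma letter_elem_IR_rels: "IR_rels (letter_elem E F K Ki) Ki F"
  unfolding IR_rels_def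
  apply (simp add: IR_letters_def letter_elem_def F_comm_def F_comm_coeff_def casimir_def Ki_weight_def)
  apply (intro conjI; rule eq_by_diff; (simp add: normalize)?; (intro sc_coeffs_zero)?;
      ((simp only: q_abbrevs)?, insert q_abbrev_facts,
        ((simp add: algebra_simps power2_eq_square; fail) | algebra))?)
  done

lemma tauR_coeff_IR_compatible: "IR_compatible F Ki (tauR_coeff F K Ki)"
  unfolding IR_compatible_def
  apply (simp add: IR_letters_def tauR_coeff_def F_comm_coeff_def Ki_weight_def)
  apply (intro conjI; rule eq_by_diff; (simp add: normalize)?; (intro sc_coeffs_zero)?;
      ((simp only: q_abbrevs)?, insert q_abbrev_facts,
        ((simp add: algebra_simps power2_eq_square; fail) | algebra))?)
  done

lemma delta_coeff_IR_compatible: "IR_compatible F Ki (delta_coeff E F K Ki)"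
  unfolding IR_compatible_def
  apply (simp add: IR_letters_def delta_coeff_def F_comm_coeff_def casimir_def Ki_weight_def)
  apply (intro conjI; rule eq_by_diff; (simp add: normalize)?; (intro sc_coeffs_zero)?;
      ((simp only: q_abbrevs)?, insert q_abbrev_facts,
        ((simp add: algebra_simps power2_eq_square; fail) | algebra))?)
  done

end

section \<open>Lifting the relations along \<Delta> and \<tau>_R\<close>

lemma lift_Ki_summand:
  fixes Z X c Kp w w' :: "'a::ring_1"
  assumes ZX: "Z * X = w * (X * Z)" and c: "w * (c * Kp) = w' * (Kp * c)"
    and cX: "c * X = X * c" and ZK: "Z * Kp = Kp * Z" and w: "\<And>a. w * a = a * w"
  shows "c * Z * (Kp * X) = w' * (Kp * X * (c * Z))"
proof -
  have "c * Z * (Kp * X) = c * Kp * (w * (X * Z))"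
    by (simp add: mult.assoc left_commute_of[OF ZK] ZX)
  also have "\<dots> = w * (c * Kp) * (X * Z)"
    by (simp add: mult.assoc left_commute_of[OF w[symmetric]])
  also have "\<dots> = w' * (Kp * X * (c * Z))"
    by (simp add: c mult.assoc left_commute_of[OF cX])
  finally show ?thesis .
qed

lemma lift_F_summand:
  fixes Z X Y G c Fp w :: "'a::ring_1"
  assumes ZX: "Z * X = w * (X * Z)" and ZY: "Z * Y = Y * Z + X * G"
    and cX: "c * X = X * c" and cY: "c * Y = Y * c" and ZF: "Z * Fp = Fp * Z" and FX: "Fp * X = X * Fp"
    and w: "\<And>a. w * a = a * w"
  shows "c * Z * (Fp * X + Y) - (Fp * X + Y) * (c * Z) = X * ((w * (c * Fp) - Fp * c) * Z + c * G)"
proof -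
  have "c * Z * (Fp * X) = X * (w * (c * Fp) * Z)"
    by (simp add: mult.assoc left_commute_of[OF ZF] ZX left_commute_of[OF w[symmetric]]
        left_commute_of[OF FX] left_commute_of[OF cX])
  moreover have "c * Z * Y = Y * (c * Z) + X * (c * G)"
    by (simp add: mult.assoc ZY distrib_left left_commute_of[OF cX] left_commute_of[OF cY])
  moreover have "Fp * X * (c * Z) = X * (Fp * c * Z)"
    by (simp add: mult.assoc left_commute_of[OF FX])
  ultimately show ?thesis
    by (simp add: algebra_simps)
qed

context Uq_scalars
begin

lemma IR_rels_lift_Ki:
  assumes Z: "IR_rels Z X Y" and c: "IR_compatible Fp Kp c" and y: "y \<in> IR_letters"
    and cX: "\<And>y x. c y x * X = X * c y x" and ZK: "\<And>x. x \<in> IR_letters \<Longrightarrow> Z x * Kp = Kp * Z x"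
    and N: "N y = (\<Sum>x\<in>IR_letters. c y x * Z x)"
  shows "N y * (Kp * X) = sc (Ki_weight q y) * (Kp * X * N y)"
proof -
  have "c y x * Z x * (Kp * X) = sc (Ki_weight q y) * (Kp * X * (c y x * Z x))"
    if x: "x \<in> IR_letters" for x
  proof (rule lift_Ki_summand)
    show "Z x * X = sc (Ki_weight q x) * (X * Z x)"
      using Z x by (simp add: IR_rels_def)
    show "sc (Ki_weight q x) * (c y x * Kp) = sc (Ki_weight q y) * (Kp * c y x)"
      using c x y by (simp add: IR_compatible_def)
  qed (simp_all add: cX ZK x sc_central)
  then show ?thesis
    by (simp add: N sum_distrib_left sum_distrib_right)
qed

lemma IR_rels_lift_F:
  assumes Z: "IR_rels Z X Y" and c: "IR_compatible Fp Kp c" and y: "y \<in> IR_letters"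
    and cX: "\<And>y x. c y x * X = X * c y x" and cY: "\<And>y x. c y x * Y = Y * c y x"
    and ZF: "\<And>x. x \<in> IR_letters \<Longrightarrow> Z x * Fp = Fp * Z x"
    and FX: "Fp * X = X * Fp" and KX: "Kp * X = X * Kp"
    and N: "\<And>y. y \<in> IR_letters \<Longrightarrow> N y = (\<Sum>x\<in>IR_letters. c y x * Z x)"
  shows "N y * (Fp * X + Y) - (Fp * X + Y) * N y = Kp * X * F_comm N y"
proof -
  let ?w = "\<lambda>x. sc (Ki_weight q x)" and ?g = "\<lambda>y x. sc (F_comm_coeff q y x)"
  have summand: "c y x * Z x * (Fp * X + Y) - (Fp * X + Y) * (c y x * Z x)
      = X * ((?w x * (c y x * Fp) - Fp * c y x) * Z x + c y x * F_comm Z x)"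
    if "x \<in> IR_letters" for x
    using Z that by (intro lift_F_summand cX cY ZF FX sc_central) (auto simp: IR_rels_def algebra_simps)
  have c_F: "?w x * (c y x * Fp) - Fp * c y x + (\<Sum>x'\<in>IR_letters. c y x' * ?g x' x)
      = Kp * (\<Sum>y'\<in>IR_letters. ?g y y' * c y' x)" if "x \<in> IR_letters" for x
    using c y that by (simp add: IR_compatible_def)
  have swap: "(\<Sum>x\<in>IR_letters. c y x * F_comm Z x)
      = (\<Sum>x\<in>IR_letters. (\<Sum>x'\<in>IR_letters. c y x' * ?g x' x) * Z x)"
    unfolding F_comm_def sum_distrib_left sum_distrib_right mult.assoc by (rule sum.swap)
  have "N y * (Fp * X + Y) - (Fp * X + Y) * N y
      = (\<Sum>x\<in>IR_letters. c y x * Z x * (Fp * X + Y) - (Fp * X + Y) * (c y x * Z x))"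
    by (simp add: N[OF y] sum_distrib_left sum_distrib_right sum_subtractf)
  also have "\<dots> = (\<Sum>x\<in>IR_letters.
      X * ((?w x * (c y x * Fp) - Fp * c y x) * Z x + c y x * F_comm Z x))"
    by (rule sum.cong[OF refl]) (rule summand)
  also have "\<dots> = X * ((\<Sum>x\<in>IR_letters. (?w x * (c y x * Fp) - Fp * c y x) * Z x)
      + (\<Sum>x\<in>IR_letters. c y x * F_comm Z x))"
    by (simp only: distrib_left sum_distrib_left sum.distrib)
  also have "\<dots> = X * (\<Sum>x\<in>IR_letters.
      (?w x * (c y x * Fp) - Fp * c y x + (\<Sum>x'\<in>IR_letters. c y x' * ?g x' x)) * Z x)"
    by (simp only: swap distrib_right sum.distrib)
  also have "\<dots> = X * (\<Sum>x\<in>IR_letters. (Kp * (\<Sum>y'\<in>IR_letters. ?g y y' * c y' x)) * Z x)"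
    by (intro arg_cong[where f="(*) X"] sum.cong refl) (simp only: c_F)
  also have "\<dots> = X * (Kp * (\<Sum>y'\<in>IR_letters. \<Sum>x\<in>IR_letters. ?g y y' * (c y' x * Z x)))"
    by (simp only: sum_distrib_left sum_distrib_right mult.assoc) (rule sum.swap)
  also have "(\<Sum>y'\<in>IR_letters. \<Sum>x\<in>IR_letters. ?g y y' * (c y' x * Z x)) = F_comm N y"
    unfolding F_comm_def by (rule sum.cong[OF refl]) (simp add: N sum_distrib_left)
  also have "X * (Kp * F_comm N y) = Kp * X * F_comm N y"
    by (simp add: mult.assoc left_commute_of[OF KX])
  finally show ?thesis .
qed

lemma IR_rels_lift:
  assumes "IR_rels Z X Y" and "IR_compatible Fp Kp c"
    and "\<And>y x. c y x * X = X * c y x" and "\<And>y x. c y x * Y = Y * c y x"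
    and "\<And>x. x \<in> IR_letters \<Longrightarrow> Z x * Fp = Fp * Z x"
    and "\<And>x. x \<in> IR_letters \<Longrightarrow> Z x * Kp = Kp * Z x"
    and "Fp * X = X * Fp" and "Kp * X = X * Kp"
    and "\<And>y. y \<in> IR_letters \<Longrightarrow> N y = (\<Sum>x\<in>IR_letters. c y x * Z x)"
  shows "IR_rels N (Kp * X) (Fp * X + Y)"
  using assms IR_rels_lift_Ki[of Z X Y Fp Kp c _ N] IR_rels_lift_F[of Z X Y Fp Kp c _ N]
  unfolding IR_rels_def by blast

lemma eval_tm_tauR_img:
  assumes "L p = letter_elem E F K Ki" and "y \<in> IR_letters"
  shows "eval_tm sc L (tauR_img q p y) = (\<Sum>x\<in>IR_letters. tauR_coeff F K Ki y x * L (Suc p) x)"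
  using assms(2) by (auto simp: assms(1) IR_letters_def tauR_coeff_def letter_elem_def algebra_simps)

lemma eval_tm_delta_img:
  assumes "L p = letter_elem E F K Ki" and "y \<in> IR_letters"
  shows "eval_tm sc L (delta_img q p y) = (\<Sum>x\<in>IR_letters. delta_coeff E F K Ki y x * L (Suc p) x)"
  using assms(2) by (auto simp: assms(1) IR_letters_def delta_coeff_def letter_elem_def algebra_simps)

text \<open>Coassociativity of the coaction \<tau>_R, in matrix form.\<close>

lemma tauR_coeff_mult:
  assumes comm: "\<forall>a\<in>{F1, K1}. \<forall>b\<in>{F2, K2, Ki2}. b * a = a * b"
    and K2_Ki2: "K2 * Ki2 = 1" and Ki2_K2: "Ki2 * K2 = 1"
    and Ki2_F2: "Ki2 * F2 = sc (q^2) * (F2 * Ki2)"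
  shows "(\<Sum>x\<in>IR_letters. tauR_coeff F1 K1 Ki1 y x * tauR_coeff F2 K2 Ki2 x z)
    = tauR_coeff (F1 * Ki2 + F2) (K1 * K2) (Ki1 * Ki2) y z"
proof -
  have swaps: "F2 * F1 = F1 * F2" "K2 * F1 = F1 * K2" "Ki2 * F1 = F1 * Ki2"
    "F2 * K1 = K1 * F2" "K2 * K1 = K1 * K2" "Ki2 * K1 = K1 * Ki2"
    using comm by auto
  have Ki2_F2': "Ki2 * (F2 * w) = sc (q^2) * (F2 * (Ki2 * w))" for w
    by (metis Ki2_F2 mult.assoc sc_commute(1))
  have cancel: "K2 * (Ki2 * w) = w" "Ki2 * (K2 * w) = w" for w
    by (simp_all add: K2_Ki2 Ki2_K2 flip: mult.assoc)
  have sc_moves: "a * (sc c * w) = sc c * (a * w)" "a * sc c = sc c * a"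
    if "a \<in> {F1, K1, Ki1, F2, K2, Ki2}" for a c w
    by (simp_all add: sc_commute)
  show ?thesis
    apply (induct y; induct z; simp add: IR_letters_def tauR_coeff_def swaps; rule eq_by_diff;
        simp add: swaps swaps[THEN left_commute_of] Ki2_F2' cancel K2_Ki2 Ki2_K2 sc_moves sc_normalize;
        intro sc_coeffs_zero; (simp only: q_abbrevs)?; insert q_abbrev_facts;
        ((simp add: algebra_simps power2_eq_square; fail) | algebra))
    done
qed

lemma letter_val_eq_letter_elem: "letter_val q sc e f k ki j = letter_elem (e j) (f j) (k j) (ki j)"
  by (simp add: fun_eq_iff letter_elem_def casimir_def split: letter.split)

lemma IR_rels_LLam_commute: "IR_rels Z X Y \<Longrightarrow> commute (Z LLam) X \<and> commute (Z LLam) Y"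
  by (simp add: IR_rels_def IR_letters_def Ki_weight_def F_comm_def F_comm_coeff_def sc_0 sc_1
      commute_def)

lemma tauR_coeff_unit:
  "y \<in> IR_letters \<Longrightarrow> (\<Sum>x\<in>IR_letters. tauR_coeff 0 1 1 y x * Z x) = Z y"
  by (auto simp: IR_letters_def tauR_coeff_def sc_0)

lemma commute_sc: "commute z (sc c)"
  by (simp add: commute_def sc_central)

lemma commute_tauR_coeff:
  "commute z F \<Longrightarrow> commute z K \<Longrightarrow> commute z Ki \<Longrightarrow> commute z (tauR_coeff F K Ki y x)"
  by (cases y; cases x) (simp_all add: tauR_coeff_def commute_closed commute_sc)

lemma commute_delta_coeff:
  "commute z E \<Longrightarrow> commute z F \<Longrightarrow> commute z K \<Longrightarrow> commute z Ki
    \<Longrightarrow> commute z (delta_coeff E F K Ki y x)"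
  by (cases y; cases x) (simp_all add: delta_coeff_def casimir_def commute_closed commute_sc)

lemma commute_letter_elem:
  "commute z E \<Longrightarrow> commute z F \<Longrightarrow> commute z K \<Longrightarrow> commute z Ki
    \<Longrightarrow> commute z (letter_elem E F K Ki l)"
  by (cases l) (simp_all add: letter_elem_def casimir_def commute_closed commute_sc)

end

section \<open>The tensor power\<close>

locale Uq_tensor = Uq_scalars sc q for sc :: "'k::field \<Rightarrow> 'a::ring_1" and q :: 'k +
  fixes e f k ki :: "nat \<Rightarrow> 'a" and n :: nat
  assumes Uq_generators_at: "i \<in> {1..n} \<Longrightarrow> Uq_generators sc q (e i) (f i) (k i) (ki i)"
    and generators_commute: "i \<in> {1..n} \<Longrightarrow> j \<in> {1..n} \<Longrightarrow> i \<noteq> j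
      \<Longrightarrow> x \<in> {e i, f i, k i, ki i} \<Longrightarrow> y \<in> {e j, f j, k j, ki j} \<Longrightarrow> x * y = y * x"
begin

abbreviation gen_val :: "nat \<Rightarrow> letter \<Rightarrow> 'a" where
  "gen_val \<equiv> letter_val q sc e f k ki"

definition commutes_at :: "nat \<Rightarrow> 'a \<Rightarrow> bool" where
  "commutes_at j z \<longleftrightarrow> commute (e j) z \<and> commute (f j) z \<and> commute (k j) z \<and> commute (ki j) z"

lemma commutes_at_mult: "commutes_at j z \<Longrightarrow> commutes_at j w \<Longrightarrow> commutes_at j (z * w)"
  by (simp add: commutes_at_def commute_mult)

lemma commutes_at_sum: "(\<And>x. x \<in> A \<Longrightarrow> commutes_at j (g x)) \<Longrightarrow> commutes_at j (\<Sum>x\<in>A. g x)"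
  by (simp add: commutes_at_def commute_sum)

lemma commutes_at_generators:
  assumes "i \<in> {1..n}" "j \<in> {1..n}" "i \<noteq> j"
  shows "commutes_at j (e i)" "commutes_at j (f i)" "commutes_at j (k i)" "commutes_at j (ki i)"
  using generators_commute[OF assms(2,1)] assms(3) by (auto simp: commutes_at_def commute_def)

lemma commute_generators_if_commutes_at:
  "commutes_at j z \<Longrightarrow> commute z (e j) \<and> commute z (f j) \<and> commute z (k j) \<and> commute z (ki j)"
  by (simp add: commutes_at_def commute_sym)

lemma commutes_at_coeffs:
  assumes "i \<in> {1..n}" "j \<in> {1..n}" "i \<noteq> j"
  shows "commutes_at j (tauR_coeff (f i) (k i) (ki i) y x)"
    and "commutes_at j (delta_coeff (e i) (f i) (k i) (ki i) y x)"
  using commutes_at_generators[OF assms]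
  by (simp_all add: commutes_at_def commute_tauR_coeff commute_delta_coeff)

lemma commutes_at_gen_val:
  assumes "i \<in> {1..n}" "j \<in> {1..n}" "i \<noteq> j"
  shows "commutes_at j (gen_val i l)"
  using commutes_at_generators[OF assms]
  by (simp add: commutes_at_def letter_val_eq_letter_elem commute_letter_elem)

text \<open>The iterated coproducts of K^-1, F and K, placed in positions P, ..., P + m - 1.\<close>

fun Delta_Ki :: "nat \<Rightarrow> nat \<Rightarrow> 'a" where
  "Delta_Ki P 0 = 1"
| "Delta_Ki P (Suc m) = ki P * Delta_Ki (Suc P) m"

fun Delta_F :: "nat \<Rightarrow> nat \<Rightarrow> 'a" where
  "Delta_F P 0 = 0"
| "Delta_F P (Suc m) = f P * Delta_Ki (Suc P) m + Delta_F (Suc P) m"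

fun Delta_K :: "nat \<Rightarrow> nat \<Rightarrow> 'a" where
  "Delta_K P 0 = 1"
| "Delta_K P (Suc m) = k P * Delta_K (Suc P) m"

lemma commute_Delta:
  "(\<And>j. P \<le> j \<Longrightarrow> j < P + m \<Longrightarrow> commutes_at j z)
    \<Longrightarrow> commute z (Delta_Ki P m) \<and> commute z (Delta_F P m) \<and> commute z (Delta_K P m)"
proof (induct m arbitrary: P)
  case 0
  then show ?case by (simp add: commute_closed)
next
  case (Suc m)
  have "commute z (Delta_Ki (Suc P) m) \<and> commute z (Delta_F (Suc P) m) \<and> commute z (Delta_K (Suc P) m)"
    using Suc.prems by (intro Suc.hyps) auto
  moreover have "commutes_at P z"
    using Suc.prems by simp
  ultimately show ?case
    by (simp add: commute_closed commute_generators_if_commutes_at)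
qed

lemma generator_commute_Delta:
  assumes "1 \<le> P" "P + m \<le> n" "g \<in> {e P, f P, k P, ki P}"
  shows "commute g (Delta_Ki (Suc P) m) \<and> commute g (Delta_F (Suc P) m) \<and> commute g (Delta_K (Suc P) m)"
proof (rule commute_Delta)
  fix j assume "Suc P \<le> j" "j < Suc P + m"
  then show "commutes_at j g"
    using assms commutes_at_generators[of P j] by auto
qed

lemma Delta_Ki_Delta_K:
  "1 \<le> P \<Longrightarrow> P + m \<le> Suc n \<Longrightarrow> Delta_Ki P m * Delta_K P m = 1 \<and> Delta_K P m * Delta_Ki P m = 1"
proof (induct m arbitrary: P)
  case 0
  then show ?case by simp
next
  case (Suc m)
  interpret Uq_generators sc q "e P" "f P" "k P" "ki P"
    using Suc.prems by (intro Uq_generators_at) simp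
  have IH: "Delta_Ki (Suc P) m * Delta_K (Suc P) m = 1" "Delta_K (Suc P) m * Delta_Ki (Suc P) m = 1"
    using Suc by auto
  have "Delta_Ki (Suc P) m * k P = k P * Delta_Ki (Suc P) m"
    and "Delta_K (Suc P) m * ki P = ki P * Delta_K (Suc P) m"
    using generator_commute_Delta[of P m "k P"] generator_commute_Delta[of P m "ki P"] Suc.prems
    by (auto simp: commute_def)
  note swap = left_commute_of[OF this(1)] left_commute_of[OF this(2)]
  show ?case
    by (simp add: mult.assoc swap K_Ki_cancel IH K_Ki Ki_K)
qed

lemma Delta_Ki_Delta_F:
  "1 \<le> P \<Longrightarrow> P + m \<le> Suc n \<Longrightarrow> Delta_Ki P m * Delta_F P m = sc (q^2) * (Delta_F P m * Delta_Ki P m)"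
proof (induct m arbitrary: P)
  case 0
  then show ?case by (simp add: sc_0)
next
  case (Suc m)
  interpret Uq_generators sc q "e P" "f P" "k P" "ki P"
    using Suc.prems by (intro Uq_generators_at) simp
  let ?X = "Delta_Ki (Suc P) m" and ?Y = "Delta_F (Suc P) m"
  have IH: "?X * ?Y = sc (q^2) * (?Y * ?X)"
    using Suc by simp
  then have IH': "?X * (?Y * w) = sc (q^2) * (?Y * (?X * w))" for w
    unfolding mult.assoc[symmetric] IH by (simp add: mult.assoc)
  have "?X * f P = f P * ?X" and "?X * ki P = ki P * ?X" and "?Y * ki P = ki P * ?Y"
    using generator_commute_Delta[of P m "f P"] generator_commute_Delta[of P m "ki P"] Suc.prems
    by (auto simp: commute_def)
  note swap = this left_commute_of[OF this(1)] left_commute_of[OF this(2)] left_commute_of[OF this(3)]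
  show ?case
    by (simp add: mult.assoc distrib_left distrib_right swap IH IH' normalize_left sc_commute_gens)
qed

lemma tauR_chain_val_gen_val:
  assumes "1 \<le> p" "p + m \<le> n" "y \<in> IR_letters"
  shows "tauR_chain_val q sc p m gen_val p y
    = (\<Sum>x\<in>IR_letters. tauR_coeff (Delta_F p m) (Delta_K p m) (Delta_Ki p m) y x * gen_val (p + m) x)"
  using assms
proof (induct m arbitrary: p y)
  case 0
  then show ?case by (simp add: tauR_coeff_unit)
next
  case (Suc m)
  let ?V = "tauR_chain_val q sc (Suc p) m gen_val"
  let ?T = "tauR_coeff (Delta_F (Suc p) m) (Delta_K (Suc p) m) (Delta_Ki (Suc p) m)"
  have "?V p = letter_elem (e p) (f p) (k p) (ki p)"
    by (simp add: tauR_chain_val_below letter_val_eq_letter_elem)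
  then have "tauR_chain_val q sc p (Suc m) gen_val p y
      = (\<Sum>x\<in>IR_letters. tauR_coeff (f p) (k p) (ki p) y x * ?V (Suc p) x)"
    using Suc.prems by (simp add: tauR_val_def eval_tm_tauR_img)
  also have "\<dots> = (\<Sum>x\<in>IR_letters. tauR_coeff (f p) (k p) (ki p) y x
      * (\<Sum>x'\<in>IR_letters. ?T x x' * gen_val (p + Suc m) x'))"
    using Suc by (intro sum.cong refl) simp
  also have "\<dots> = (\<Sum>x'\<in>IR_letters. (\<Sum>x\<in>IR_letters. tauR_coeff (f p) (k p) (ki p) y x * ?T x x')
      * gen_val (p + Suc m) x')"
    by (simp only: sum_distrib_left sum_distrib_right mult.assoc) (rule sum.swap)
  also have "\<dots> = (\<Sum>x'\<in>IR_letters. tauR_coeff (Delta_F p (Suc m)) (Delta_K p (Suc m))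
      (Delta_Ki p (Suc m)) y x' * gen_val (p + Suc m) x')"
  proof -
    have "\<forall>a\<in>{f p, k p}. \<forall>b\<in>{Delta_F (Suc p) m, Delta_K (Suc p) m, Delta_Ki (Suc p) m}. b * a = a * b"
      using generator_commute_Delta[of p m "f p"] generator_commute_Delta[of p m "k p"] Suc.prems
      by (auto simp: commute_def)
    moreover have "Delta_K (Suc p) m * Delta_Ki (Suc p) m = 1" "Delta_Ki (Suc p) m * Delta_K (Suc p) m = 1"
      using Delta_Ki_Delta_K[of "Suc p" m] Suc.prems by auto
    moreover have "Delta_Ki (Suc p) m * Delta_F (Suc p) m = sc (q^2) * (Delta_F (Suc p) m * Delta_Ki (Suc p) m)"
      using Delta_Ki_Delta_F[of "Suc p" m] Suc.prems by auto
    ultimately show ?thesis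
      by (simp add: tauR_coeff_mult)
  qed
  finally show ?case .
qed

definition IR_block_rels :: "(nat \<Rightarrow> letter \<Rightarrow> 'a) \<Rightarrow> nat \<Rightarrow> nat \<Rightarrow> bool" where
  "IR_block_rels L P m \<longleftrightarrow> IR_rels (L P) (Delta_Ki P m) (Delta_F P m)
     \<and> (\<forall>y\<in>IR_letters. \<forall>j\<in>{1..n}. j < P \<or> P + m \<le> j \<longrightarrow> commutes_at j (L P y))"

lemma IR_block_rels_gen_val: "P \<in> {1..n} \<Longrightarrow> IR_block_rels gen_val P 1"
proof -
  assume P: "P \<in> {1..n}"
  interpret Uq_generators sc q "e P" "f P" "k P" "ki P"
    using P by (rule Uq_generators_at)
  show ?thesis
    using letter_elem_IR_rels P
    by (auto simp: IR_block_rels_def letter_val_eq_letter_elem[symmetric] intro!: commutes_at_gen_val)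
qed

lemma IR_block_rels_lift:
  assumes L: "IR_block_rels L (Suc p) m" and p: "1 \<le> p" "p + m \<le> n"
    and c_local: "\<And>j y x. j \<in> {1..n} \<Longrightarrow> j \<noteq> p \<Longrightarrow> commutes_at j (c y x)"
    and c: "IR_compatible (f p) (ki p) c"
    and L': "\<And>y. y \<in> IR_letters \<Longrightarrow> L' p y = (\<Sum>x\<in>IR_letters. c y x * L (Suc p) x)"
  shows "IR_block_rels L' p (Suc m)"
proof -
  let ?X = "Delta_Ki (Suc p) m" and ?Y = "Delta_F (Suc p) m"
  have L_local: "\<And>x j. x \<in> IR_letters \<Longrightarrow> j \<in> {1..n} \<Longrightarrow> j < Suc p \<or> Suc p + m \<le> j
      \<Longrightarrow> commutes_at j (L (Suc p) x)"
    using L by (auto simp: IR_block_rels_def)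
  have "commute (c y x) ?X \<and> commute (c y x) ?Y" for y x
    using commute_Delta[of "Suc p" m "c y x"] c_local p by auto
  moreover have "commute g ?X" if "g \<in> {f p, ki p}" for g
    using generator_commute_Delta[of p m g] that p by auto
  moreover have "commute g (L (Suc p) x)" if "g \<in> {f p, ki p}" "x \<in> IR_letters" for g x
    using L_local[of x p] that p by (auto simp: commutes_at_def)
  ultimately have "IR_rels (L' p) (ki p * ?X) (f p * ?X + ?Y)"
    using L by (intro IR_rels_lift[OF _ c _ _ _ _ _ _ L']) (auto simp: IR_block_rels_def commute_def)
  moreover have "commutes_at j (L' p y)"
    if "y \<in> IR_letters" "j \<in> {1..n}" "j < p \<or> p + Suc m \<le> j" for y j
    using that p by (auto simp: L' intro!: commutes_at_sum commutes_at_mult c_local L_local)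
  ultimately show ?thesis
    by (simp add: IR_block_rels_def)
qed

lemma IR_block_rels_tauR_val:
  assumes "IR_block_rels L (Suc p) m" "L p = gen_val p" "1 \<le> p" "p + m \<le> n"
  shows "IR_block_rels (tauR_val q sc p L) p (Suc m)"
proof -
  interpret Uq_generators sc q "e p" "f p" "k p" "ki p"
    using assms by (intro Uq_generators_at) simp
  show ?thesis
    using assms tauR_coeff_IR_compatible commutes_at_coeffs(1)[of p]
    by (intro IR_block_rels_lift) (auto simp: tauR_val_def eval_tm_tauR_img letter_val_eq_letter_elem)
qed

lemma IR_block_rels_delta_val:
  assumes "IR_block_rels L (Suc p) m" "L p = gen_val p" "1 \<le> p" "p + m \<le> n"
  shows "IR_block_rels (delta_val q sc p L) p (Suc m)"
proof -
  interpret Uq_generators sc q "e p" "f p" "k p" "ki p"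
    using assms by (intro Uq_generators_at) simp
  show ?thesis
    using assms delta_coeff_IR_compatible commutes_at_coeffs(2)[of p]
    by (intro IR_block_rels_lift) (auto simp: delta_val_def eval_tm_delta_img letter_val_eq_letter_elem)
qed

lemma IR_block_rels_lam_evens_val:
  "1 \<le> p \<Longrightarrow> p + 2 * m \<le> n \<Longrightarrow> IR_block_rels (lam_evens_val q sc gen_val p m) p (Suc (2 * m))"
proof (induct m arbitrary: p)
  case 0
  then show ?case using IR_block_rels_gen_val[of p] by simp
next
  case (Suc m)
  let ?W = "lam_evens_val q sc gen_val (Suc (Suc p)) m"
  have "IR_block_rels ?W (Suc (Suc p)) (Suc (2 * m))"
    using Suc by auto
  then have "IR_block_rels (tauR_val q sc (Suc p) ?W) (Suc p) (Suc (Suc (2 * m)))"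
    using Suc.prems by (intro IR_block_rels_tauR_val) (simp_all add: lam_evens_val_below)
  then have "IR_block_rels (delta_val q sc p (tauR_val q sc (Suc p) ?W)) p (Suc (Suc (Suc (2 * m))))"
    using Suc.prems
    by (intro IR_block_rels_delta_val) (simp_all add: lam_evens_val_below tauR_val_other)
  then show ?case
    by simp
qed

lemma IR_block_rels_LLam_commute_Delta:
  assumes "IR_block_rels L P m" "1 \<le> P" "P + m \<le> Suc n"
  shows "commute (L P LLam) (Delta_Ki P m) \<and> commute (L P LLam) (Delta_F P m)
    \<and> commute (L P LLam) (Delta_K P m)"
proof -
  have "commute (L P LLam) (Delta_Ki P m) \<and> commute (L P LLam) (Delta_F P m)"
    using assms(1) IR_rels_LLam_commute unfolding IR_block_rels_def by blast
  moreover have "Delta_Ki P m * Delta_K P m = 1 \<and> Delta_K P m * Delta_Ki P m = 1"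
    using assms(2,3) by (rule Delta_Ki_Delta_K)
  ultimately show ?thesis
    by (blast intro: commute_inverse)
qed

lemma commute_gen_val: "commutes_at j z \<Longrightarrow> commute z (gen_val j l)"
  by (simp add: commutes_at_def letter_val_eq_letter_elem commute_letter_elem commute_sym)

lemma eval_tm_LamA_pair:
  assumes "1 \<le> a" "a < b" "b \<le> n"
  defines "r \<equiv> b - Suc a"
  shows "eval_tm sc gen_val (LamA q {a, b}) = (\<Sum>x\<in>IR_letters. delta_coeff (e a) (f a) (k a) (ki a) LLam x
    * (\<Sum>x'\<in>IR_letters. tauR_coeff (Delta_F (Suc a) r) (Delta_K (Suc a) r) (Delta_Ki (Suc a) r) x x'
        * gen_val b x'))"
proof -
  let ?V = "tauR_chain_val q sc (Suc a) r gen_val"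
  have "LamA q {a, b} = fold (tauR_at q) [Suc a..<Suc a + r] (delta_at q a (At a LLam))"
    using LamA_pair[of a b q] assms by (simp add: r_def)
  then have "eval_tm sc gen_val (LamA q {a, b}) = eval_tm sc ?V (delta_at q a (At a LLam))"
    by (simp only: eval_tm_fold_tauR_at)
  also have "\<dots> = eval_tm sc ?V (delta_img q a LLam)"
    by (simp add: eval_tm_delta_at delta_val_def)
  also have "\<dots> = (\<Sum>x\<in>IR_letters. delta_coeff (e a) (f a) (k a) (ki a) LLam x * ?V (Suc a) x)"
    by (rule eval_tm_delta_img) (simp_all add: tauR_chain_val_below letter_val_eq_letter_elem IR_letters_def)
  finally show ?thesis
    using assms by (simp add: tauR_chain_val_gen_val)
qed

lemma commute_Lambda_evens_Lambda_pair:
  assumes "1 \<le> kk" "2 * kk + 1 \<le> n"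
  shows "commute (eval_tm sc gen_val (LamA q ((\<lambda>i. 2 * i) ` {1..kk})))
    (eval_tm sc gen_val (LamA q {1, 2 * kk + 1}))"
proof -
  obtain m where kk: "kk = Suc m"
    using assms(1) by (cases kk) auto
  let ?r = "Suc (2 * m)" and ?N = "2 * kk + 1" and ?C = "lam_evens_val q sc gen_val 2 m 2 LLam"
  have block: "IR_block_rels (lam_evens_val q sc gen_val 2 m) 2 ?r"
    using assms kk by (intro IR_block_rels_lam_evens_val) simp_all
  then have Delta: "commute ?C (Delta_Ki 2 ?r)" "commute ?C (Delta_F 2 ?r)" "commute ?C (Delta_K 2 ?r)"
    using IR_block_rels_LLam_commute_Delta[OF block] assms kk by simp_all
  have "commutes_at 1 ?C" and at_N: "commutes_at ?N ?C"
    using block assms kk by (simp_all add: IR_block_rels_def IR_letters_def)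
  then have at_1: "commute ?C (e 1)" "commute ?C (f 1)" "commute ?C (k 1)" "commute ?C (ki 1)"
    by (simp_all add: commute_generators_if_commutes_at)
  have C: "eval_tm sc gen_val (LamA q ((\<lambda>i. 2 * i) ` {1..kk})) = ?C"
    by (simp only: kk eval_tm_LamA_evens)
  have D: "eval_tm sc gen_val (LamA q {1, ?N}) = (\<Sum>x\<in>IR_letters. delta_coeff (e 1) (f 1) (k 1) (ki 1) LLam x
      * (\<Sum>x'\<in>IR_letters. tauR_coeff (Delta_F 2 ?r) (Delta_K 2 ?r) (Delta_Ki 2 ?r) x x' * gen_val ?N x'))"
    using eval_tm_LamA_pair[of 1 ?N] assms kk
    by (simp add: numeral_2_eq_2 del: Delta_Ki.simps Delta_F.simps Delta_K.simps)
  show ?thesis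
    unfolding C D
    by (intro commute_sum commute_mult commute_delta_coeff commute_tauR_coeff commute_gen_val
        at_1 at_N Delta)
qed

end

lemma Uq_tensor_if_model:
  assumes "not_root_of_unity q" and model: "Uq_tensor_model q n sc e f k ki"
  shows "Uq_tensor sc q e f k ki n"
proof -
  have q: "q \<noteq> 0" "q ^ 2 \<noteq> 1"
    using assms(1) by (auto simp: not_root_of_unity_def)
  then have "q - inverse q \<noteq> 0"
    by (auto simp: power2_eq_square field_simps)
  with q model have scalars: "Uq_scalars sc q"
    unfolding Uq_tensor_model_def Uq_scalars_def by blast
  have "Uq_generators sc q (e i) (f i) (k i) (ki i)" if "i \<in> {1..n}" for i
    using scalars model that unfolding Uq_tensor_model_def Uq_generators_def Uq_generators_axioms_def
    by blast
  moreover have "x * y = y * x"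
    if "i \<in> {1..n}" "j \<in> {1..n}" "i \<noteq> j" "x \<in> {e i, f i, k i, ki i}" "y \<in> {e j, f j, k j, ki j}"
    for i j x y
    using model that unfolding Uq_tensor_model_def by blast
  ultimately show ?thesis
    using scalars by (simp add: Uq_tensor_def Uq_tensor_axioms_def)
qed

theorem lemma4p5:
  fixes q :: "'k::field" and sc :: "'k \<Rightarrow> 'a::ring_1"
    and e f k ki :: "nat \<Rightarrow> 'a" and kk n :: nat
  assumes "not_root_of_unity q"
    and "kk \<ge> 1" and "n \<ge> 2 * kk + 1"
    and "Uq_tensor_model q n sc e f k ki"
  shows "ev q sc e f k ki (LamA q ((\<lambda>i. 2 * i) ` {1..kk})) * ev q sc e f k ki (LamA q {1, 2 * kk + 1})
       = ev q sc e f k ki (LamA q {1, 2 * kk + 1}) * ev q sc e f k ki (LamA q ((\<lambda>i. 2 * i) ` {1..kk}))"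
proof -
  interpret Uq_tensor sc q e f k ki n
    using assms(1,4) by (rule Uq_tensor_if_model)
  show ?thesis
    using commute_Lambda_evens_Lambda_pair[OF assms(2,3)] by (simp only: ev_eq_eval_tm commute_def)
qed

end
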